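(* Let $\varepsilon\in(0,1)$ and let $\mu,\lambda$ be positive integers with $\lambda\le(1-\varepsilon)e\mu$. Consider the $(\mu,\lambda)$ EA on OneMax with populations $P_0,P_1,\dots$, and let $g$ be the potential defined in the context. Then, for $n$ sufficiently large, for all $t\ge0$, \[E[g(P_{t+1})\mid P_t]\le g(P_t)+2\lambda.\]
   Context: $f$ is OneMax, $f(x)=\sum_i x_i$. The $(\mu,\lambda)$ EA: $P_0$ consists of $\mu$ independent uniformly random points of $\{0,1\}^n$; in each generation $\lambda$ offspring are created independently, each by choosing a parent uniformly at random from $P_t$ and flipping each bit of a copy independently with probability $1/n$; $P_{t+1}$ consists of the $\mu$ offspring with largest $f$-values (ties broken randomly). Potential: $\tau=\frac{4e}{\varepsilon}$, $\alpha=1-\frac1\tau\ln\big(1+\frac1\tau\big)$, $f_0=\lceil\alpha n\rceil$, $g(x)=\tau^{f(x)-f_0}$ if $f(x)\ge f_0$ and $g(x)=0$ otherwise; for a population (multiset) $P$, $g(P)=\sum_{x\in P}g(x)$. *)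

theory Defs
  imports "HOL-Probability.Probability"
begin

definition onemax :: "bool list \<Rightarrow> nat" where
  "onemax x = length (filter id x)"

fun mutate :: "real \<Rightarrow> bool list \<Rightarrow> bool list pmf" where
  "mutate p [] = return_pmf []"
| "mutate p (b # bs) =
     bernoulli_pmf p \<bind> (\<lambda>c. mutate p bs \<bind> (\<lambda>rest. return_pmf ((b \<noteq> c) # rest)))"

fun iid_list :: "nat \<Rightarrow> 'a pmf \<Rightarrow> 'a list pmf" where
  "iid_list 0 D = return_pmf []"
| "iid_list (Suc k) D = D \<bind> (\<lambda>x. iid_list k D \<bind> (\<lambda>xs. return_pmf (x # xs)))"

definition offspring :: "nat \<Rightarrow> bool list multiset \<Rightarrow> bool list pmf" where
  "offspring n P = pmf_of_multiset P \<bind> mutate (1 / real n)"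

definition top_sets :: "('a \<Rightarrow> nat) \<Rightarrow> nat \<Rightarrow> 'a list \<Rightarrow> nat set set" where
  "top_sets f mu xs = {S. S \<subseteq> {..<length xs} \<and> card S = mu \<and>
      (\<forall>i\<in>S. \<forall>j\<in>{..<length xs} - S. f (xs ! j) \<le> f (xs ! i))}"

definition select :: "nat \<Rightarrow> bool list list \<Rightarrow> bool list multiset pmf" where
  "select mu xs = map_pmf (\<lambda>S. image_mset (\<lambda>i. xs ! i) (mset_set S))
                          (pmf_of_set (top_sets onemax mu xs))"

text \<open>One generation of the (mu,lambda) EA on OneMax: distribution of P_{t+1} given P_t = P.\<close>
definition ea_step :: "nat \<Rightarrow> nat \<Rightarrow> nat \<Rightarrow> bool list multiset \<Rightarrow> bool list multiset pmf" where
  "ea_step n mu lam P = iid_list lam (offspring n P) \<bind> select mu"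

definition tau :: "real \<Rightarrow> real" where
  "tau \<epsilon> = 4 * exp 1 / \<epsilon>"

definition alpha :: "real \<Rightarrow> real" where
  "alpha \<epsilon> = 1 - (1 / tau \<epsilon>) * ln (1 + 1 / tau \<epsilon>)"

definition f0 :: "real \<Rightarrow> nat \<Rightarrow> int" where
  "f0 \<epsilon> n = \<lceil>alpha \<epsilon> * real n\<rceil>"

definition g_pt :: "real \<Rightarrow> nat \<Rightarrow> bool list \<Rightarrow> real" where
  "g_pt \<epsilon> n x = (if int (onemax x) \<ge> f0 \<epsilon> n
                   then tau \<epsilon> ^ nat (int (onemax x) - f0 \<epsilon> n) else 0)"

definition g_pop :: "real \<Rightarrow> nat \<Rightarrow> bool list multiset \<Rightarrow> real" where
  "g_pop \<epsilon> n P = (\<Sum>x\<in>#P. g_pt \<epsilon> n x)"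

end

theory Submission
  imports Defs
begin

text \<open>
  Write \<open>t = tau \<epsilon>\<close>. Up to the constant factor \<open>t ^ f0\<close>, the potential of a string is
  \<open>t ^ onemax\<close> (cut off below \<open>f0\<close>), and the expectation of \<open>t ^ onemax\<close> after standard bit mutation
  factorises over the bits. For a parent with \<open>k \<ge> f0\<close> ones this expectation is at most
  \<open>exp (2 / t - 1)\<close> times its potential, which is at most \<open>mu / lam\<close> because
  \<open>lam \<le> (1 - \<epsilon>) e mu\<close>; the threshold \<open>alpha n\<close> is exactly what makes the exponent come out below
  \<open>2 / t - 1\<close>. For \<open>k < f0\<close> the expectation is at most \<open>2\<close>. Hence every offspring has expected
  potential at most \<open>g(P) / lam + 2\<close>, the \<open>lam\<close> offspring together at most \<open>g(P) + 2 lam\<close>, and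
  selection keeps a sub-multiset of the offspring, so it cannot increase the potential.
\<close>

lemma exists_top_subset:
  fixes f :: "'a \<Rightarrow> 'b::linorder"
  assumes "finite I" "m \<le> card I"
  shows "\<exists>S\<subseteq>I. card S = m \<and> (\<forall>i\<in>S. \<forall>j\<in>I - S. f j \<le> f i)"
  using assms(2)
proof (induction m)
  case 0
  show ?case by (intro exI[of _ "{}"]) simp
next
  case (Suc m)
  then obtain S where S: "S \<subseteq> I" "card S = m" "\<forall>i\<in>S. \<forall>j\<in>I - S. f j \<le> f i" by auto
  have "finite S" using S(1) assms(1) finite_subset by blast
  have "I - S \<noteq> {}"
    using card_mono[OF \<open>finite S\<close>, of I] Suc.prems S(2) by auto
  then have "Max (f ` (I - S)) \<in> f ` (I - S)" using assms(1) by (intro Max_in) auto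
  then obtain j where "j \<in> I - S" "f j = Max (f ` (I - S))" by (metis imageE)
  then have j: "j \<in> I - S" "\<forall>k\<in>I - S. f k \<le> f j" using assms(1) by simp_all
  show ?case
    using S j \<open>finite S\<close> by (intro exI[of _ "insert j S"]) auto
qed

lemma top_sets_nonempty:
  assumes "mu \<le> length xs"
  shows "top_sets f mu xs \<noteq> {}"
  using exists_top_subset[of "{..<length xs}" mu "\<lambda>i. f (xs ! i)"] assms
  by (auto simp: top_sets_def)

lemma finite_top_sets: "finite (top_sets f mu xs)"
  by (rule finite_subset[of _ "Pow {..<length xs}"]) (auto simp: top_sets_def)

lemma nn_integral_select_le:
  assumes m: "mu \<le> length xs" and h: "\<And>x. 0 \<le> h x"
  shows "(\<integral>\<^sup>+Q. ennreal (\<Sum>x\<in>#Q. h x) \<partial>select mu xs) \<le> ennreal (sum_list (map h xs))"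
proof -
  have "(\<Sum>x\<in>#Q. h x) \<le> sum_list (map h xs)" if Q: "Q \<in> set_pmf (select mu xs)" for Q
  proof -
    obtain S where "S \<in> top_sets onemax mu xs" and Q_eq: "Q = image_mset (\<lambda>i. xs ! i) (mset_set S)"
      using Q top_sets_nonempty[OF m, of onemax] finite_top_sets[of onemax mu xs]
      by (auto simp: select_def)
    then have S: "S \<subseteq> {..<length xs}" by (simp add: top_sets_def)
    have "(\<Sum>x\<in>#Q. h x) = (\<Sum>i\<in>S. h (xs ! i))"
      by (simp add: Q_eq sum_unfold_sum_mset image_mset.compositionality comp_def)
    also have "\<dots> \<le> (\<Sum>i<length xs. h (xs ! i))"
      using S h by (intro sum_mono2) auto
    also have "\<dots> = sum_list (map h xs)"
      by (simp add: sum_list_sum_nth atLeast0LessThan)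
    finally show ?thesis .
  qed
  then have "(\<integral>\<^sup>+Q. ennreal (\<Sum>x\<in>#Q. h x) \<partial>select mu xs)
      \<le> (\<integral>\<^sup>+Q. ennreal (sum_list (map h xs)) \<partial>select mu xs)"
    by (intro nn_integral_mono_AE AE_pmfI ennreal_leI)
  then show ?thesis by simp
qed

lemma length_of_set_pmf_iid_list: "xs \<in> set_pmf (iid_list k D) \<Longrightarrow> length xs = k"
  by (induction k arbitrary: xs) auto

lemma nn_integral_iid_list_sum_list:
  assumes h: "\<And>x. 0 \<le> h x"
  shows "(\<integral>\<^sup>+xs. ennreal (sum_list (map h xs)) \<partial>iid_list k D) = of_nat k * (\<integral>\<^sup>+x. ennreal (h x) \<partial>D)"
proof (induction k)
  case 0
  then show ?case by simp
next
  case (Suc k)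
  have "0 \<le> sum_list (map h xs)" for xs using h by (induction xs) (auto intro: add_nonneg_nonneg)
  then have "(\<integral>\<^sup>+xs. ennreal (sum_list (map h xs)) \<partial>iid_list (Suc k) D)
     = (\<integral>\<^sup>+x. (\<integral>\<^sup>+xs. ennreal (h x) + ennreal (sum_list (map h xs)) \<partial>iid_list k D) \<partial>D)"
    using h by simp
  also have "\<dots> = (\<integral>\<^sup>+x. ennreal (h x) + of_nat k * (\<integral>\<^sup>+x. ennreal (h x) \<partial>D) \<partial>D)"
    by (simp add: nn_integral_add Suc)
  also have "\<dots> = of_nat (Suc k) * (\<integral>\<^sup>+x. ennreal (h x) \<partial>D)"
    by (simp add: nn_integral_add algebra_simps)
  finally show ?case .
qed

lemma sum_count_eq_sum_mset:
  fixes h :: "'a \<Rightarrow> real"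
  assumes "finite A" "set_mset P \<subseteq> A"
  shows "(\<Sum>x\<in>A. of_nat (count P x) * h x) = (\<Sum>x\<in>#P. h x)"
  using assms(2)
proof (induction P)
  case (add a P)
  have "(\<Sum>x\<in>A. of_nat (count (add_mset a P) x) * h x)
      = (\<Sum>x\<in>A. of_nat (count P x) * h x) + (\<Sum>x\<in>A. if x = a then h x else 0)"
    by (subst sum.distrib[symmetric], rule sum.cong) (auto simp: algebra_simps)
  then show ?case using add assms(1) by simp
qed simp

lemma nn_integral_pmf_of_multiset:
  assumes P: "P \<noteq> {#}" and h: "\<And>x. 0 \<le> h x"
  shows "(\<integral>\<^sup>+x. ennreal (h x) \<partial>pmf_of_multiset P) = ennreal ((\<Sum>x\<in>#P. h x) / real (size P))"
proof -
  have "(\<integral>\<^sup>+x. ennreal (h x) \<partial>pmf_of_multiset P)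
      = (\<Sum>x\<in>set_mset P. ennreal (h x) * ennreal (real (count P x) / real (size P)))"
    using P by (subst nn_integral_measure_pmf_finite) auto
  also have "\<dots> = ennreal (\<Sum>x\<in>set_mset P. of_nat (count P x) * h x / real (size P))"
    using h by (simp add: ennreal_mult[symmetric] mult.commute)
  also have "\<dots> = ennreal ((\<Sum>x\<in>#P. h x) / real (size P))"
    by (simp add: sum_divide_distrib[symmetric] sum_count_eq_sum_mset)
  finally show ?thesis .
qed

lemma nn_integral_ea_step_le:
  assumes "mu \<le> lam" and h: "\<And>x. 0 \<le> h x"
  shows "(\<integral>\<^sup>+Q. ennreal (\<Sum>x\<in>#Q. h x) \<partial>ea_step n mu lam P)
    \<le> of_nat lam * (\<integral>\<^sup>+x. ennreal (h x) \<partial>offspring n P)"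
proof -
  have "(\<integral>\<^sup>+Q. ennreal (\<Sum>x\<in>#Q. h x) \<partial>ea_step n mu lam P)
      = (\<integral>\<^sup>+xs. (\<integral>\<^sup>+Q. ennreal (\<Sum>x\<in>#Q. h x) \<partial>select mu xs) \<partial>iid_list lam (offspring n P))"
    by (simp add: ea_step_def)
  also have "\<dots> \<le> (\<integral>\<^sup>+xs. ennreal (sum_list (map h xs)) \<partial>iid_list lam (offspring n P))"
    using assms by (intro nn_integral_mono_AE AE_pmfI nn_integral_select_le)
      (auto dest: length_of_set_pmf_iid_list)
  also have "\<dots> = of_nat lam * (\<integral>\<^sup>+x. ennreal (h x) \<partial>offspring n P)"
    using h by (rule nn_integral_iid_list_sum_list)
  finally show ?thesis .
qed

lemma nn_integral_offspring_le:
  assumes P: "P \<noteq> {#}" and h: "\<And>x. 0 \<le> h x" and cd: "0 \<le> c" "0 \<le> d"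
    and mutate_le: "\<And>x. x \<in># P \<Longrightarrow>
      (\<integral>\<^sup>+y. ennreal (h y) \<partial>mutate (1 / real n) x) \<le> ennreal (c * h x + d)"
  shows "(\<integral>\<^sup>+x. ennreal (h x) \<partial>offspring n P) \<le> ennreal (c * (\<Sum>x\<in>#P. h x) / real (size P) + d)"
proof -
  have "(\<integral>\<^sup>+x. ennreal (h x) \<partial>offspring n P)
      = (\<integral>\<^sup>+x. (\<integral>\<^sup>+y. ennreal (h y) \<partial>mutate (1 / real n) x) \<partial>pmf_of_multiset P)"
    by (simp add: offspring_def)
  also have "\<dots> \<le> (\<integral>\<^sup>+x. ennreal (c * h x + d) \<partial>pmf_of_multiset P)"
    using P mutate_le by (intro nn_integral_mono_AE AE_pmfI) auto
  also have "\<dots> = ennreal ((\<Sum>x\<in>#P. c * h x + d) / real (size P))"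
    using h cd P by (intro nn_integral_pmf_of_multiset) auto
  also have "(\<Sum>x\<in>#P. c * h x + d) / real (size P) = c * (\<Sum>x\<in>#P. h x) / real (size P) + d"
    using P by (simp add: sum_mset.distrib sum_mset_distrib_left add_divide_distrib)
  finally show ?thesis .
qed

lemma expectation_le_of_nn_integral_le:
  fixes M :: "'a pmf"
  assumes f: "\<And>x. 0 \<le> f x" and le: "(\<integral>\<^sup>+x. ennreal (f x) \<partial>M) \<le> ennreal r" and r: "0 \<le> r"
  shows "measure_pmf.expectation M f \<le> r"
proof -
  have "measure_pmf.expectation M f = enn2real (\<integral>\<^sup>+x. ennreal (f x) \<partial>M)"
    using f by (intro integral_eq_nn_integral) auto
  also have "\<dots> \<le> enn2real (ennreal r)" using le by (intro enn2real_mono) auto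
  finally show ?thesis using r by simp
qed

lemma onemax_Cons: "onemax (b # x) = (if b then Suc (onemax x) else onemax x)"
  by (simp add: onemax_def)

lemma onemax_le_length: "onemax x \<le> length x"
  by (simp add: onemax_def)

definition mutate_pgf :: "real \<Rightarrow> nat \<Rightarrow> nat \<Rightarrow> real \<Rightarrow> real" where
  "mutate_pgf p n k c = ((1 - p) * c + p) ^ k * (p * c + (1 - p)) ^ (n - k)"

lemma nn_integral_bernoulli_flip:
  assumes "0 \<le> p" "p \<le> 1" "0 \<le> c"
  shows "(\<integral>\<^sup>+d. ennreal (if b \<noteq> d then c else 1) \<partial>bernoulli_pmf p)
    = ennreal (if b then (1 - p) * c + p else p * c + (1 - p))"
  using assms by (cases b) (simp_all add: ennreal_mult' ennreal_plus mult.commute)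

lemma nn_integral_mutate_power:
  assumes p: "0 \<le> p" "p \<le> 1" and c: "0 \<le> c"
  shows "(\<integral>\<^sup>+y. ennreal (c ^ onemax y) \<partial>mutate p x) = ennreal (mutate_pgf p (length x) (onemax x) c)"
proof (induction x)
  case Nil
  then show ?case by (simp add: onemax_def mutate_pgf_def)
next
  case (Cons b x)
  define X where "X = mutate_pgf p (length x) (onemax x) c"
  have flip: "(\<integral>\<^sup>+y. ennreal (c ^ onemax ((b \<noteq> d) # y)) \<partial>mutate p x)
      = ennreal (if b \<noteq> d then c else 1) * (\<integral>\<^sup>+y. ennreal (c ^ onemax y) \<partial>mutate p x)" for d
    using c by (cases "b \<noteq> d") (simp_all add: onemax_Cons ennreal_mult nn_integral_cmult)
  have "(\<integral>\<^sup>+y. ennreal (c ^ onemax y) \<partial>mutate p (b # x))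
      = (\<integral>\<^sup>+d. ennreal (if b \<noteq> d then c else 1) * (\<integral>\<^sup>+y. ennreal (c ^ onemax y) \<partial>mutate p x)
          \<partial>bernoulli_pmf p)"
    unfolding mutate.simps nn_integral_bind_pmf by (intro nn_integral_cong) (use flip in simp)
  also have "\<dots> = ennreal (if b then (1 - p) * c + p else p * c + (1 - p)) * ennreal X"
    by (subst nn_integral_multc)
      (simp, simp only: Cons X_def nn_integral_bernoulli_flip[OF p c])
  also have "\<dots> = ennreal (mutate_pgf p (length (b # x)) (onemax (b # x)) c)"
    using p c onemax_le_length[of x]
    by (simp add: ennreal_mult[symmetric] X_def mutate_pgf_def onemax_Cons Suc_diff_le mult_ac)
  finally show ?case .
qed

lemma one_plus_power_le_exp:
  fixes x :: real
  assumes "-1 \<le> x"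
  shows "(1 + x) ^ j \<le> exp (real j * x)"
proof -
  have "(1 + x) ^ j \<le> exp x ^ j"
    using assms by (intro power_mono) simp_all
  also have "\<dots> = exp (real j * x)" by (simp add: exp_of_nat_mult)
  finally show ?thesis .
qed

lemma mutate_pgf_above_threshold:
  fixes t :: real and n k :: nat
  assumes t: "2 \<le> t" and n: "0 < n" and kn: "k \<le> n"
    and k: "(1 - ln (1 + 1 / t) / t) * real n \<le> real k"
  shows "mutate_pgf (1 / real n) n k t \<le> t ^ k * exp (2 / t - 1)"
proof -
  define p u L where "p = 1 / real n" and "u = 1 / t" and "L = ln (1 + u)"
  have ut: "u * t = 1" and u: "0 < u" "u \<le> 1 / 2" using t by (auto simp: u_def)
  have p: "0 < p" "p \<le> 1" "real n * p = 1" using n by (auto simp: p_def)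
  have L: "0 \<le> L" "L \<le> u" using u by (auto simp: L_def ln_add_one_self_le_self)
  have "p * (1 - u) \<le> 1 * 1" using p u by (intro mult_mono) auto
  hence A: "(1 - p * (1 - u)) ^ k \<le> exp (real k * - (p * (1 - u)))"
    using one_plus_power_le_exp[of "- (p * (1 - u))" k] by simp
  have B: "(1 + p * (t - 1)) ^ (n - k) \<le> exp (real (n - k) * (p * (t - 1)))"
    using p t by (intro one_plus_power_le_exp) (simp add: order_trans[OF _ mult_nonneg_nonneg])
  have "(1 - u * L) * (real n * p) \<le> real k * p"
    using mult_right_mono[OF k, of p] p by (simp add: u_def L_def mult.assoc)
  hence a: "1 - u * L \<le> real k * p" using p by simp
  have "real k * - (p * (1 - u)) + real (n - k) * (p * (t - 1)) = (t - 1) - real k * p * (t - u)"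
    using kn p ut by (simp add: algebra_simps)
  also have "\<dots> \<le> (t - 1) - (1 - u * L) * (t - u)"
    using a t u by (intro diff_left_mono mult_right_mono) auto
  also have "\<dots> = u - 1 + L * (1 - u * u)" using ut by (simp add: algebra_simps)
  also have "\<dots> \<le> u - 1 + u * 1"
    using L u by (intro add_left_mono mult_mono) (auto simp: mult_le_one)
  finally have exponent: "real k * - (p * (1 - u)) + real (n - k) * (p * (t - 1)) \<le> 2 / t - 1"
    by (simp add: u_def)
  have "mutate_pgf p n k t = t ^ k * ((1 - p * (1 - u)) ^ k * (1 + p * (t - 1)) ^ (n - k))"
    using ut by (simp add: mutate_pgf_def power_mult_distrib[symmetric] algebra_simps)
  also have "\<dots> \<le> t ^ k * (exp (real k * - (p * (1 - u))) * exp (real (n - k) * (p * (t - 1))))"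
    using A B p t u by (intro mult_left_mono mult_mono) auto
  also have "\<dots> \<le> t ^ k * exp (2 / t - 1)"
    using exponent t by (intro mult_left_mono) (simp_all flip: exp_add)
  finally show ?thesis by (simp add: p_def)
qed

lemma mutate_pgf_below_threshold:
  fixes t :: real and n k F :: nat
  assumes t: "exp 1 \<le> t" "t \<le> real n" and kn: "k \<le> n" and kF: "k < F"
    and F: "(1 - ln (1 + 1 / t) / t) * real n \<le> real F"
  shows "mutate_pgf (1 / real n) n k t \<le> 2 * t ^ F"
proof -
  define p u L d where "p = 1 / real n" and "u = 1 / t" and "L = ln (1 + u)" and "d = F - k"
  have t1: "1 \<le> t" using t(1) exp_ge_add_one_self[of 1] by linarith
  have ut: "u * t = 1" and u: "0 < u" "u \<le> 1" using t1 by (auto simp: u_def)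
  have p: "0 < p" "p * t \<le> 1" "real n * p = 1" using t t1 by (auto simp: p_def field_simps)
  have F_eq: "F = k + d" using kF by (simp add: d_def)
  have pt: "0 \<le> p * (t - 1)" using p t1 by simp
  have "mutate_pgf p n k t = ((1 - p) * t + p) ^ k * (1 + p * (t - 1)) ^ (n - k)"
    by (simp add: mutate_pgf_def algebra_simps)
  also have "\<dots> \<le> t ^ k * (1 + p * (t - 1)) ^ (n - k)"
  proof (rule mult_right_mono[OF power_mono])
    show "(1 - p) * t + p \<le> t" "0 \<le> (1 - p) * t + p"
      using p t1 mult_left_mono[OF t1, of p] by (simp_all add: algebra_simps)
  qed (use pt in simp)
  also have "(1 + p * (t - 1)) ^ (n - k) \<le> exp (real (n - k) * (p * (t - 1)))"
    using pt by (intro one_plus_power_le_exp) simp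
  also have "real (n - k) * (p * (t - 1)) \<le> (u * L * real n + real d) * (p * t)"
  proof -
    have "real (n - k) \<le> u * L * real n + real d"
      using F kn F_eq by (simp add: u_def L_def algebra_simps)
    thus ?thesis using p t1 by (intro mult_mono) auto
  qed
  also have "\<dots> = L * (u * t) * (real n * p) + real d * (p * t)" by (simp add: algebra_simps)
  also have "\<dots> \<le> L + real d" using p ut mult_left_le[OF p(2), of "real d"] by simp
  also have "exp (L + real d) = (1 + u) * exp 1 ^ d"
    using u by (simp add: L_def exp_add exp_of_nat_mult[symmetric] mult.commute)
  finally have "mutate_pgf p n k t \<le> t ^ k * ((1 + u) * exp 1 ^ d)"
    using t1 by (auto intro: mult_left_mono order_trans)
  also have "\<dots> \<le> t ^ k * (2 * t ^ d)"
    using t t1 u by (intro mult_left_mono mult_mono power_mono) auto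
  finally show ?thesis by (simp add: p_def F_eq power_add algebra_simps)
qed

lemma tau_ge:
  assumes "0 < \<epsilon>" "\<epsilon> < 1"
  shows "4 * exp 1 \<le> tau \<epsilon>"
  using assms by (simp add: tau_def field_simps)

lemma exp_tau_le_ratio:
  fixes mu lam :: nat
  assumes e: "0 < \<epsilon>" "\<epsilon> < 1" and lam: "0 < lam" "real lam \<le> (1 - \<epsilon>) * exp 1 * real mu"
  shows "exp (2 / tau \<epsilon> - 1) \<le> real mu / real lam"
proof -
  have "2 / tau \<epsilon> \<le> \<epsilon>"
    using e exp_ge_add_one_self[of 1] by (simp add: tau_def field_simps)
  hence "exp (2 / tau \<epsilon>) * (1 - \<epsilon>) \<le> exp \<epsilon> * exp (- \<epsilon>)"
    using e exp_ge_add_one_self[of "- \<epsilon>"] by (intro mult_mono) auto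
  hence "exp (2 / tau \<epsilon>) * (1 - \<epsilon>) * real mu \<le> real mu"
    using mult_right_mono[of _ 1 "real mu"] by (simp add: exp_minus)
  moreover have "exp (2 / tau \<epsilon> - 1) * real lam \<le> exp (2 / tau \<epsilon>) * (1 - \<epsilon>) * real mu"
    using mult_left_mono[OF lam(2), of "exp (2 / tau \<epsilon> - 1)"] by (simp add: exp_diff)
  ultimately show ?thesis using lam by (simp add: field_simps)
qed

lemma g_pt_eq_power:
  assumes "0 < \<epsilon>" "\<epsilon> < 1"
  shows "g_pt \<epsilon> n y = (if nat (f0 \<epsilon> n) \<le> onemax y then tau \<epsilon> ^ (onemax y - nat (f0 \<epsilon> n)) else 0)"
proof -
  have t: "1 \<le> tau \<epsilon>" using tau_ge[OF assms] exp_ge_add_one_self[of 1] by linarith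
  have "ln (1 + 1 / tau \<epsilon>) \<le> 1 / tau \<epsilon>" using t by (intro ln_add_one_self_le_self) simp
  also have "\<dots> \<le> tau \<epsilon>" using t mult_mono[OF t t] by (simp add: divide_le_eq)
  finally have "ln (1 + 1 / tau \<epsilon>) / tau \<epsilon> \<le> 1" using t by simp
  hence "0 \<le> f0 \<epsilon> n" by (simp add: f0_def alpha_def order_less_le_trans[of _ 0])
  thus ?thesis by (auto simp: g_pt_def nat_diff_distrib' le_nat_iff)
qed

lemma g_pt_nonneg: "0 < \<epsilon> \<Longrightarrow> 0 \<le> g_pt \<epsilon> n x"
  by (simp add: g_pt_def tau_def)

lemma g_pop_nonneg: "0 < \<epsilon> \<Longrightarrow> 0 \<le> g_pop \<epsilon> n P"
  unfolding g_pop_def by (induction P) (auto intro: add_nonneg_nonneg g_pt_nonneg)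

lemma nn_integral_mutate_g_pt_le:
  fixes mu lam n :: nat
  assumes e: "0 < \<epsilon>" "\<epsilon> < 1" and n: "tau \<epsilon> \<le> real n" and x: "length x = n"
    and lam: "0 < lam" "real lam \<le> (1 - \<epsilon>) * exp 1 * real mu"
  shows "(\<integral>\<^sup>+y. ennreal (g_pt \<epsilon> n y) \<partial>mutate (1 / real n) x)
    \<le> ennreal (real mu / real lam * g_pt \<epsilon> n x + 2)"
proof -
  define t F k where "t = tau \<epsilon>" and "F = nat (f0 \<epsilon> n)" and "k = onemax x"
  have t: "2 \<le> t" "exp 1 \<le> t" "t \<le> real n"
    using tau_ge[OF e] exp_ge_add_one_self[of 1] n by (auto simp: t_def)
  have p: "0 \<le> 1 / real n" "1 / real n \<le> 1" using t by auto
  have F: "(1 - ln (1 + 1 / t) / t) * real n \<le> real F"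
    using real_nat_ceiling_ge by (simp add: F_def f0_def alpha_def t_def)
  have k: "k \<le> n" using onemax_le_length[of x] x by (simp add: k_def)
  have g: "g_pt \<epsilon> n y = (if F \<le> onemax y then t ^ (onemax y - F) else 0)" for y
    using g_pt_eq_power[OF e] by (simp add: t_def F_def)
  have "(\<integral>\<^sup>+y. ennreal (g_pt \<epsilon> n y) \<partial>mutate (1 / real n) x)
      \<le> (\<integral>\<^sup>+y. ennreal (1 / t ^ F) * ennreal (t ^ onemax y) \<partial>mutate (1 / real n) x)"
    using t by (intro nn_integral_mono) (auto simp: g power_diff ennreal_mult[symmetric])
  also have "\<dots> = ennreal (1 / t ^ F) * ennreal (mutate_pgf (1 / real n) n k t)"
    using p t by (subst nn_integral_cmult)
      (simp_all add: nn_integral_mutate_power x k_def)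
  also have "\<dots> = ennreal (mutate_pgf (1 / real n) n k t / t ^ F)"
    using p t by (simp add: ennreal_mult[symmetric] mutate_pgf_def)
  also have "mutate_pgf (1 / real n) n k t / t ^ F \<le> real mu / real lam * g_pt \<epsilon> n x + 2"
  proof (cases "F \<le> k")
    case True
    have "mutate_pgf (1 / real n) n k t / t ^ F \<le> t ^ k * exp (2 / t - 1) / t ^ F"
      using t mutate_pgf_above_threshold[OF t(1) _ k] F True by (intro divide_right_mono) auto
    also have "\<dots> = t ^ (k - F) * exp (2 / t - 1)" using t True by (simp add: power_diff)
    also have "\<dots> \<le> t ^ (k - F) * (real mu / real lam)"
      using exp_tau_le_ratio[OF e lam] t by (intro mult_left_mono) (simp_all add: t_def)
    finally show ?thesis using True by (simp add: g k_def mult.commute)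
  next
    case False
    have "mutate_pgf (1 / real n) n k t / t ^ F \<le> 2"
      using mutate_pgf_below_threshold[OF t(2,3) k _ F] False t by (simp add: divide_le_eq)
    moreover have "0 \<le> real mu / real lam * g_pt \<epsilon> n x" using t by (simp add: g)
    ultimately show ?thesis by linarith
  qed
  finally show ?thesis by (simp add: ennreal_leI)
qed

theorem lemma3:
  fixes \<epsilon> :: real and mu lam :: nat
  assumes "0 < \<epsilon>" and "\<epsilon> < 1" and "0 < mu" and "0 < lam" and "mu \<le> lam"
    and "real lam \<le> (1 - \<epsilon>) * exp 1 * real mu"
  shows "\<exists>N. \<forall>n\<ge>N. \<forall>P. size P = mu \<and> (\<forall>x\<in>#P. length x = n) \<longrightarrow>
           measure_pmf.expectation (ea_step n mu lam P) (g_pop \<epsilon> n)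
             \<le> g_pop \<epsilon> n P + 2 * real lam"
proof (intro exI[of _ "nat \<lceil>tau \<epsilon>\<rceil>"] allI impI)
  fix n and P :: "bool list multiset"
  assume "nat \<lceil>tau \<epsilon>\<rceil> \<le> n" and P: "size P = mu \<and> (\<forall>x\<in>#P. length x = n)"
  then have n: "tau \<epsilon> \<le> real n" by linarith
  note g = g_pt_nonneg[OF assms(1), of n] and G = g_pop_nonneg[OF assms(1)]
  have offspring_le: "(\<integral>\<^sup>+x. ennreal (g_pt \<epsilon> n x) \<partial>offspring n P)
      \<le> ennreal (real mu / real lam * g_pop \<epsilon> n P / real (size P) + 2)"
    using P assms(3) nn_integral_mutate_g_pt_le[OF assms(1,2) n _ assms(4,6)] unfolding g_pop_def
    by (intro nn_integral_offspring_le[OF _ g]) auto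
  have "(\<integral>\<^sup>+Q. ennreal (g_pop \<epsilon> n Q) \<partial>ea_step n mu lam P)
      \<le> of_nat lam * (\<integral>\<^sup>+x. ennreal (g_pt \<epsilon> n x) \<partial>offspring n P)"
    using nn_integral_ea_step_le[where h = "g_pt \<epsilon> n", OF assms(5) g] by (simp add: g_pop_def)
  also have "\<dots> \<le> of_nat lam * ennreal (real mu / real lam * g_pop \<epsilon> n P / real (size P) + 2)"
    using offspring_le by (rule mult_left_mono) simp
  also have "\<dots> = ennreal (real lam * (real mu / real lam * g_pop \<epsilon> n P / real (size P) + 2))"
    using G by (simp add: ennreal_of_nat_eq_real_of_nat ennreal_mult)
  also have "real lam * (real mu / real lam * g_pop \<epsilon> n P / real (size P) + 2)
      = g_pop \<epsilon> n P + 2 * real lam"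
    using P assms(3,4) by (simp add: field_simps)
  finally show "measure_pmf.expectation (ea_step n mu lam P) (g_pop \<epsilon> n) \<le> g_pop \<epsilon> n P + 2 * real lam"
    using G by (intro expectation_le_of_nn_integral_le) auto
qed

end
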